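(* Let $X$ be a separable real normed vector space and let $g\in\Gamma(X)$ be sublinear. Then $w^{\ast}\text{-}\operatorname{qri}\partial g(0)\neq\emptyset$, and so there exists $x^{\ast}\in X^{\ast}$ such that the set $[g\le x^{\ast}]$ is a linear space.
   Context: $X^{\ast}$ is the topological dual of $X$, $\langle x,x^{\ast}\rangle:=x^{\ast}(x)$. $\Gamma(X)$ is the set of proper lower semicontinuous convex functions $X\to\mathbb{R}\cup\{\pm\infty\}$. $\partial g(0)=\{x^{\ast}\in X^{\ast}:\langle x',x^{\ast}\rangle\le g(x')\ \forall x'\in X\}$. $[g\le x^{\ast}]:=\{x\in X:g(x)\le\langle x,x^{\ast}\rangle\}$. For convex $B\subset X^{\ast}$, $w^{\ast}\text{-}\operatorname{qri}B=\{b\in B:\text{the weak}^{\ast}\text{ closure of }\mathbb{R}_+(B-b)\text{ is a linear subspace}\}$. *)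

theory Defs
  imports "HOL-Analysis.Analysis" "HOL-Library.Extended_Real"
begin

definition dual_space :: "('a::real_normed_vector \<Rightarrow> real) set" where
  "dual_space = {f. bounded_linear f}"

text \<open>Weak-star topology on the dual: topology of pointwise convergence,
  i.e. the subspace topology induced by the product topology on functions.\<close>
definition weak_star :: "('a::real_normed_vector \<Rightarrow> real) topology" where
  "weak_star = subtopology (product_topology (\<lambda>_. euclideanreal) UNIV) dual_space"

definition fun_subspace :: "('a \<Rightarrow> real) set \<Rightarrow> bool" where
  "fun_subspace S \<longleftrightarrow> (\<lambda>_. 0) \<in> S \<and> (\<forall>f\<in>S. \<forall>h\<in>S. (\<lambda>x. f x + h x) \<in> S)
     \<and> (\<forall>t::real. \<forall>f\<in>S. (\<lambda>x. t * f x) \<in> S)"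

definition wstar_qri :: "('a::real_normed_vector \<Rightarrow> real) set \<Rightarrow> ('a \<Rightarrow> real) set" where
  "wstar_qri B = {b \<in> B. fun_subspace
      (weak_star closure_of {(\<lambda>x. t * (c x - b x)) | t c. t \<ge> 0 \<and> c \<in> B})}"

definition subdiff0 :: "('a::real_normed_vector \<Rightarrow> ereal) \<Rightarrow> ('a \<Rightarrow> real) set" where
  "subdiff0 g = {xs \<in> dual_space. \<forall>x'. ereal (xs x') \<le> g x'}"

definition below_set :: "('a \<Rightarrow> ereal) \<Rightarrow> ('a \<Rightarrow> real) \<Rightarrow> 'a set" where
  "below_set g xs = {x. g x \<le> ereal (xs x)}"

definition proper_fun :: "('a \<Rightarrow> ereal) \<Rightarrow> bool" where
  "proper_fun g \<longleftrightarrow> (\<forall>x. g x \<noteq> -\<infinity>) \<and> (\<exists>x. g x \<noteq> \<infinity>)"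

definition lsc_fun :: "('a::topological_space \<Rightarrow> ereal) \<Rightarrow> bool" where
  "lsc_fun g \<longleftrightarrow> (\<forall>c. closed {x. g x \<le> c})"

definition convex_efun :: "('a::real_vector \<Rightarrow> ereal) \<Rightarrow> bool" where
  "convex_efun g \<longleftrightarrow> (\<forall>x y. \<forall>t::real. 0 \<le> t \<and> t \<le> 1 \<longrightarrow>
      g (t *\<^sub>R x + (1 - t) *\<^sub>R y) \<le> ereal t * g x + ereal (1 - t) * g y)"

definition sublinear_efun :: "('a::real_vector \<Rightarrow> ereal) \<Rightarrow> bool" where
  "sublinear_efun g \<longleftrightarrow> (\<forall>x y. g (x + y) \<le> g x + g y)
      \<and> (\<forall>x. \<forall>t::real. t > 0 \<longrightarrow> g (t *\<^sub>R x) = ereal t * g x)"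

definition separable_normed :: "'a::metric_space itself \<Rightarrow> bool" where
  "separable_normed _ \<longleftrightarrow> (\<exists>D::'a set. countable D \<and> closure D = UNIV)"

end

theory Submission
  imports Defs
begin

text \<open>
  The subdifferential B = \<partial>g(0) is weak-star separable, because X is separable and B is the
  union of the norm-bounded pieces {c \<in> B. \<parallel>c\<parallel> \<le> m}, on which pointwise convergence on a countable
  dense set already controls pointwise convergence everywhere. Take a weak-star dense sequence
  f_n in B and weights w_n > 0 with \<Sum> w_n = 1 decaying fast enough for b = \<Sum> w_n f_n to converge
  in X*. Since g - b = \<Sum> w_n (g - f_n) has nonnegative terms, every reflection
  b + w_n (b - f_n) still lies below g, i.e. in B. Hence b - c is a weak-star limit of the cone
  generated by B - b for every c \<in> B, so the closure of that cone is a linear space and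
  b \<in> w*-qri B.

  If g(x) \<le> b(x), the same identity forces f_n(x) = g(x) for all n, hence c(x) = g(x) for all
  c \<in> B by density. Thus [g \<le> b] is the set where all subgradients agree with g, and this set
  is a linear space because g is the supremum of B (Hahn-Banach, applied to the Pasch-Hausdorff
  envelopes of g, which are finite sublinear minorants of g converging to g by lower
  semicontinuity).
\<close>

section \<open>Sublinear functions and the Hahn-Banach theorem\<close>

definition sublinear :: "('a::real_vector \<Rightarrow> real) \<Rightarrow> bool" where
  "sublinear q \<longleftrightarrow> (\<forall>x y. q (x + y) \<le> q x + q y) \<and> (\<forall>t>0. \<forall>x. q (t *\<^sub>R x) = t * q x)"

lemma sublinearI:
  fixes q :: "'a::real_vector \<Rightarrow> real"
  assumes add: "\<And>x y. q (x + y) \<le> q x + q y"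
    and scale: "\<And>t x. t > 0 \<Longrightarrow> q (t *\<^sub>R x) \<le> t * q x"
  shows "sublinear q"
proof -
  have "q (t *\<^sub>R x) = t * q x" if t: "t > 0" for t x
  proof -
    have "q x = q (inverse t *\<^sub>R (t *\<^sub>R x))" using t by simp
    also have "\<dots> \<le> inverse t * q (t *\<^sub>R x)" using scale[of "inverse t" "t *\<^sub>R x"] t by simp
    finally have "t * q x \<le> q (t *\<^sub>R x)" using t by (simp add: field_simps)
    with scale[OF t, of x] show ?thesis by linarith
  qed
  with add show ?thesis unfolding sublinear_def by blast
qed

lemma sublinear_add: "sublinear q \<Longrightarrow> q (x + y) \<le> q x + q y"
  by (simp add: sublinear_def)

lemma sublinear_zero:
  assumes "sublinear q" shows "q 0 = 0"
  using assms unfolding sublinear_def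
  by (metis scale_zero_right zero_less_numeral mult_2 add_cancel_left_left)

lemma sublinear_scaleR:
  assumes "sublinear q" "t \<ge> 0" shows "q (t *\<^sub>R x) = t * q x"
  using assms sublinear_zero[OF assms(1)] by (cases "t = 0") (auto simp: sublinear_def)

lemma sublinear_minus_ge:
  assumes "sublinear q" shows "- q x \<le> q (- x)"
  using sublinear_add[OF assms, of x "- x"] sublinear_zero[OF assms] by simp

lemma le_cInf_add:
  fixes A B :: "real set"
  assumes "A \<noteq> {}" "B \<noteq> {}" "\<And>a b. a \<in> A \<Longrightarrow> b \<in> B \<Longrightarrow> c \<le> a + b"
  shows "c \<le> Inf A + Inf B"
proof -
  have "c - b \<le> Inf A" if "b \<in> B" for b
    by (rule cInf_greatest[OF assms(1)]) (use assms(3) that in force)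
  then have "c - Inf A \<le> Inf B"
    by (intro cInf_greatest[OF assms(2)]) force
  then show ?thesis by simp
qed

definition lower_along :: "('a::real_vector \<Rightarrow> real) \<Rightarrow> 'a \<Rightarrow> 'a \<Rightarrow> real" where
  "lower_along q y x = Inf {q (x + t *\<^sub>R y) - t * q y | t. t \<ge> 0}"

lemma lower_along_le:
  assumes q: "sublinear q" and t: "t \<ge> 0"
  shows "lower_along q y x \<le> q (x + t *\<^sub>R y) - t * q y"
proof -
  have "- q (- x) \<le> q (x + s *\<^sub>R y) - s * q y" if "s \<ge> 0" for s
    using sublinear_add[OF q, of "x + s *\<^sub>R y" "- x"] sublinear_scaleR[OF q that] by simp
  then have "bdd_below {q (x + s *\<^sub>R y) - s * q y | s. s \<ge> 0}" unfolding bdd_below_def by blast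
  then show ?thesis unfolding lower_along_def by (rule cInf_lower[rotated]) (use t in blast)
qed

lemma lower_along_add_le:
  assumes q: "sublinear q"
  shows "lower_along q y (x1 + x2) \<le> lower_along q y x1 + lower_along q y x2"
  unfolding lower_along_def[of q y x1] lower_along_def[of q y x2]
proof (rule le_cInf_add)
  fix a b
  assume "a \<in> {q (x1 + t *\<^sub>R y) - t * q y | t. t \<ge> 0}" "b \<in> {q (x2 + t *\<^sub>R y) - t * q y | t. t \<ge> 0}"
  then obtain t1 t2 where t: "t1 \<ge> 0" "t2 \<ge> 0" and ab: "a = q (x1 + t1 *\<^sub>R y) - t1 * q y"
    "b = q (x2 + t2 *\<^sub>R y) - t2 * q y" by blast
  have eq: "x1 + x2 + (t1 + t2) *\<^sub>R y = (x1 + t1 *\<^sub>R y) + (x2 + t2 *\<^sub>R y)"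
    by (simp add: algebra_simps)
  have "0 \<le> t1 + t2" using t by simp
  from lower_along_le[OF q this, of y "x1 + x2", unfolded eq]
  have "lower_along q y (x1 + x2) \<le> q ((x1 + t1 *\<^sub>R y) + (x2 + t2 *\<^sub>R y)) - (t1 + t2) * q y" .
  also have "\<dots> \<le> a + b"
    using sublinear_add[OF q, of "x1 + t1 *\<^sub>R y" "x2 + t2 *\<^sub>R y"] ab by (simp add: algebra_simps)
  finally show "lower_along q y (x1 + x2) \<le> a + b" .
qed auto

lemma lower_along_scaleR_le:
  assumes q: "sublinear q" and s: "s > 0"
  shows "lower_along q y (s *\<^sub>R x) \<le> s * lower_along q y x"
proof -
  have "lower_along q y (s *\<^sub>R x) / s \<le> lower_along q y x" unfolding lower_along_def[of q y x]
  proof (rule cInf_greatest)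
    fix a assume "a \<in> {q (x + t *\<^sub>R y) - t * q y | t. t \<ge> 0}"
    then obtain t where t: "t \<ge> 0" and a: "a = q (x + t *\<^sub>R y) - t * q y" by blast
    have "s *\<^sub>R x + (s * t) *\<^sub>R y = s *\<^sub>R (x + t *\<^sub>R y)" by (simp add: algebra_simps)
    then have "lower_along q y (s *\<^sub>R x) \<le> q (s *\<^sub>R (x + t *\<^sub>R y)) - (s * t) * q y"
      using lower_along_le[OF q, of "s * t" y "s *\<^sub>R x"] t s by simp
    also have "\<dots> = s * a"
      using sublinear_scaleR[OF q, of s "x + t *\<^sub>R y"] s unfolding a by (simp add: algebra_simps)
    finally show "lower_along q y (s *\<^sub>R x) / s \<le> a" using s by (simp add: field_simps)
  qed auto
  then show ?thesis using s by (simp add: field_simps)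
qed

lemma sublinear_lower_along: "sublinear q \<Longrightarrow> sublinear (lower_along q y)"
  by (rule sublinearI) (simp_all add: lower_along_add_le lower_along_scaleR_le)

lemma sublinear_Inf_chain:
  fixes Q :: "('a::real_vector \<Rightarrow> real) set"
  assumes Q: "Q \<noteq> {}" "\<And>q. q \<in> Q \<Longrightarrow> sublinear q"
    and chain: "\<And>q1 q2. q1 \<in> Q \<Longrightarrow> q2 \<in> Q \<Longrightarrow> q1 \<le> q2 \<or> q2 \<le> q1"
    and bdd: "\<And>x. bdd_below ((\<lambda>q. q x) ` Q)"
  shows "sublinear (\<lambda>x. Inf ((\<lambda>q. q x) ` Q))" (is "sublinear ?r")
proof (rule sublinearI)
  have ne: "(\<lambda>q. q x) ` Q \<noteq> {}" for x using Q(1) by blast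
  have low: "?r x \<le> q x" if "q \<in> Q" for q x by (rule cInf_lower[OF _ bdd]) (use that in blast)
  fix x y
  show "?r (x + y) \<le> ?r x + ?r y"
  proof (rule le_cInf_add[OF ne ne])
    fix a b assume "a \<in> (\<lambda>q. q x) ` Q" "b \<in> (\<lambda>q. q y) ` Q"
    then obtain q1 q2 where q: "q1 \<in> Q" "q2 \<in> Q" "a = q1 x" "b = q2 y" by blast
    obtain q where "q \<in> Q" "q x \<le> a" "q y \<le> b"
      using chain[OF q(1,2)] q unfolding le_fun_def by blast
    then show "?r (x + y) \<le> a + b"
      using low[of q "x + y"] sublinear_add[OF Q(2), of q x y] by linarith
  qed
next
  fix s :: real and x assume s: "s > 0"
  have "?r (s *\<^sub>R x) / s \<le> ?r x"
  proof (rule cInf_greatest)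
    show "(\<lambda>q. q x) ` Q \<noteq> {}" using Q(1) by blast
    fix a assume "a \<in> (\<lambda>q. q x) ` Q"
    then obtain q where q: "q \<in> Q" "a = q x" by blast
    have "?r (s *\<^sub>R x) \<le> q (s *\<^sub>R x)" by (rule cInf_lower[OF _ bdd]) (use q in blast)
    also have "\<dots> = s * a" using Q(2)[OF q(1)] s q(2) by (simp add: sublinear_def)
    finally show "?r (s *\<^sub>R x) / s \<le> a" using s by (simp add: field_simps)
  qed
  then show "?r (s *\<^sub>R x) \<le> s * ?r x" using s by (simp add: field_simps)
qed

lemma exists_minimal_sublinear_below:
  fixes p :: "'a::real_vector \<Rightarrow> real"
  assumes p: "sublinear p"
  obtains m where "sublinear m" "m \<le> p" "\<And>q. sublinear q \<Longrightarrow> q \<le> m \<Longrightarrow> q = m"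
proof -
  define A where "A = {q. sublinear q \<and> q \<le> p}"
  have "partial_order_on A (relation_of (\<ge>) A)"
    by (rule partial_order_on_relation_ofI) auto
  moreover have "\<exists>u\<in>A. \<forall>q\<in>C. u \<le> q" if C: "C \<in> Chains (relation_of (\<ge>) A)" for C
  proof (cases "C = {}")
    case True
    then show ?thesis using p unfolding A_def by auto
  next
    case False
    have CA: "C \<subseteq> A" using C unfolding Chains_def relation_of_def by blast
    have "- p (- x) \<le> q x" if "q \<in> C" for q x
    proof -
      have "sublinear q" "q (- x) \<le> p (- x)" using that CA unfolding A_def le_fun_def by auto
      then show ?thesis using sublinear_minus_ge[of q "- x"] by simp
    qed
    then have bdd: "bdd_below ((\<lambda>q. q x) ` C)" for x unfolding bdd_below_def by blast
    define r where "r x = Inf ((\<lambda>q. q x) ` C)" for x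
    have low: "r \<le> q" if "q \<in> C" for q
      unfolding le_fun_def r_def using cInf_lower[OF _ bdd] that by blast
    have "sublinear r" unfolding r_def
      by (rule sublinear_Inf_chain[OF False _ _ bdd])
        (use CA C in \<open>auto simp: A_def Chains_def relation_of_def\<close>)
    moreover obtain q where "q \<in> C" using False by blast
    ultimately have "r \<in> A" using low CA unfolding A_def by fastforce
    with low show ?thesis by blast
  qed
  ultimately obtain m where "m \<in> A" "\<And>q. q \<in> A \<Longrightarrow> q \<le> m \<Longrightarrow> q = m"
    using predicate_Zorn[of A "(\<ge>)"] by blast
  then show ?thesis using that unfolding A_def by (auto intro: order_trans)
qed

text \<open>Minimality is tested against lower_along m y, which is antisymmetric at y.\<close>
lemma linear_if_minimal_sublinear:
  assumes m: "sublinear m" and min: "\<And>q. sublinear q \<Longrightarrow> q \<le> m \<Longrightarrow> q = m"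
  shows "linear m"
proof -
  have m_neg: "m (- y) = - m y" for y
  proof -
    have "lower_along m y \<le> m" using lower_along_le[OF m, of 0] by (simp add: le_fun_def)
    then have "lower_along m y = m" by (rule min[OF sublinear_lower_along[OF m]])
    then have "m (- y) \<le> - m y" using lower_along_le[OF m, of 1 y "- y"] sublinear_zero[OF m] by simp
    then show ?thesis using sublinear_minus_ge[OF m, of y] by simp
  qed
  show ?thesis
  proof (rule linearI)
    fix x y
    have "m x \<le> m (x + y) + m (- y)" using sublinear_add[OF m, of "x + y" "- y"] by simp
    then show "m (x + y) = m x + m y" using sublinear_add[OF m, of x y] m_neg[of y] by simp
  next
    fix c :: real and x
    show "m (c *\<^sub>R x) = c *\<^sub>R m x"
      using sublinear_scaleR[OF m, of c x] sublinear_scaleR[OF m, of "- c" "- x"] m_neg[of x]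
      by (cases "c \<ge> 0") auto
  qed
qed

lemma sublinear_Hahn_Banach:
  fixes p :: "'a::real_vector \<Rightarrow> real"
  assumes p: "sublinear p"
  obtains f where "linear f" "\<And>x. f x \<le> p x" "f x0 = p x0"
proof -
  obtain m where m: "sublinear m" "m \<le> lower_along p x0"
    and min: "\<And>q. sublinear q \<Longrightarrow> q \<le> m \<Longrightarrow> q = m"
    using exists_minimal_sublinear_below[OF sublinear_lower_along[OF p]] by blast
  have lin: "linear m" by (rule linear_if_minimal_sublinear[OF m(1) min])
  have below: "m x \<le> p x" for x
  proof -
    have "lower_along p x0 x \<le> p x" using lower_along_le[OF p, of 0 x0 x] by simp
    with m(2) show ?thesis by (meson le_fun_def order_trans)
  qed
  have "lower_along p x0 (- x0) \<le> - p x0"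
    using lower_along_le[OF p, of 1 x0 "- x0"] sublinear_zero[OF p] by simp
  then have "m (- x0) \<le> - p x0" using m(2) by (meson le_fun_def order_trans)
  then have "p x0 \<le> m x0" using linear_neg[OF lin, of x0] by simp
  with below[of x0] show ?thesis using that[OF lin below] by simp
qed

section \<open>Weak-star closures\<close>

lemma openin_product_topology_real_box:
  assumes "finite J" "\<epsilon> > 0"
  shows "openin (product_topology (\<lambda>_. euclideanreal) UNIV) {h. \<forall>x\<in>J. \<bar>h x - y x\<bar> < \<epsilon>}"
proof -
  define U where "U x = (if x \<in> J then ball (y x) \<epsilon> else UNIV)" for x
  have "{h. \<forall>x\<in>J. \<bar>h x - y x\<bar> < \<epsilon>} = Pi\<^sub>E UNIV U"
  proof (intro equalityI subsetI)
    fix h assume "h \<in> Pi\<^sub>E UNIV U"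
    then have "h x \<in> U x" for x by (simp add: PiE_UNIV_domain Pi_iff)
    then have "h x \<in> ball (y x) \<epsilon>" if "x \<in> J" for x using that by (metis U_def)
    then show "h \<in> {h. \<forall>x\<in>J. \<bar>h x - y x\<bar> < \<epsilon>}" by (simp add: dist_real_def abs_minus_commute)
  qed (simp add: U_def PiE_UNIV_domain dist_real_def abs_minus_commute)
  moreover have "openin (product_topology (\<lambda>_. euclideanreal) UNIV) (Pi\<^sub>E UNIV U)"
    by (rule openin_PiE_gen[THEN iffD2], rule disjI2)
      (auto intro: finite_subset[OF _ \<open>finite J\<close>] simp: U_def)
  ultimately show ?thesis by simp
qed

lemma closure_of_product_topology_real_iff:
  fixes S :: "('a \<Rightarrow> real) set"
  shows "y \<in> product_topology (\<lambda>_. euclideanreal) UNIV closure_of S \<longleftrightarrow>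
    (\<forall>J. finite J \<longrightarrow> (\<forall>\<epsilon>>0. \<exists>s\<in>S. \<forall>x\<in>J. \<bar>s x - y x\<bar> < \<epsilon>))"
  (is "y \<in> ?P closure_of S \<longleftrightarrow> ?approx")
proof
  assume y: "y \<in> ?P closure_of S"
  show ?approx
  proof (intro allI impI)
    fix J :: "'a set" and \<epsilon> :: real assume "finite J" "\<epsilon> > 0"
    define V where "V = {h. \<forall>x\<in>J. \<bar>h x - y x\<bar> < \<epsilon>}"
    have "openin ?P V" "y \<in> V"
      using \<open>finite J\<close> \<open>\<epsilon> > 0\<close> by (simp_all add: V_def openin_product_topology_real_box)
    then obtain s where "s \<in> S" "s \<in> V" using y unfolding in_closure_of by blast
    then show "\<exists>s\<in>S. \<forall>x\<in>J. \<bar>s x - y x\<bar> < \<epsilon>" unfolding V_def by blast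
  qed
next
  assume approx: ?approx
  show "y \<in> ?P closure_of S" unfolding in_closure_of
  proof (intro conjI allI impI)
    fix T assume "y \<in> T \<and> openin ?P T"
    then obtain U where fin: "finite {x. U x \<noteq> UNIV}" and U: "\<And>x. open (U x)"
      and yU: "y \<in> Pi\<^sub>E UNIV U" and UT: "Pi\<^sub>E UNIV U \<subseteq> T"
      unfolding openin_product_topology_alt by auto
    define J where "J = {x. U x \<noteq> UNIV}"
    have "\<exists>e>0. ball (y x) e \<subseteq> U x" for x using U yU open_contains_ball by blast
    then obtain e where e: "\<And>x. e x > 0" "\<And>x. ball (y x) (e x) \<subseteq> U x" by metis
    define \<epsilon> where "\<epsilon> = Min (insert 1 (e ` J))"
    have "\<epsilon> > 0" using fin e(1) unfolding \<epsilon>_def J_def by simp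
    then obtain s where s: "s \<in> S" "\<forall>x\<in>J. \<bar>s x - y x\<bar> < \<epsilon>" using approx fin unfolding J_def by blast
    have "s x \<in> U x" for x
    proof (cases "x \<in> J")
      case True
      then have "\<epsilon> \<le> e x" using fin unfolding \<epsilon>_def J_def by simp
      then show ?thesis using s(2) True e(2)[of x] by (force simp: dist_real_def abs_minus_commute)
    qed (simp add: J_def)
    then have "s \<in> Pi\<^sub>E UNIV U" by (simp add: PiE_UNIV_domain)
    then show "\<exists>s. s \<in> S \<and> s \<in> T" using s(1) UT by blast
  qed simp
qed

lemma in_weak_star_closure_of_iff:
  assumes "S \<subseteq> dual_space"
  shows "y \<in> weak_star closure_of S \<longleftrightarrow> y \<in> dual_space \<and>
    (\<forall>J. finite J \<longrightarrow> (\<forall>\<epsilon>>0. \<exists>s\<in>S. \<forall>x\<in>J. \<bar>s x - y x\<bar> < \<epsilon>))"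
  using assms unfolding weak_star_def closure_of_subtopology
  by (simp add: Int_absorb1 closure_of_product_topology_real_iff)

lemma in_weak_star_closure_ofI:
  assumes "S \<subseteq> dual_space" "y \<in> dual_space"
    and "\<And>J \<epsilon>. finite J \<Longrightarrow> \<epsilon> > 0 \<Longrightarrow> \<exists>s\<in>S. \<forall>x\<in>J. \<bar>s x - y x\<bar> < \<epsilon>"
  shows "y \<in> weak_star closure_of S"
  using assms in_weak_star_closure_of_iff[OF assms(1)] by blast

lemma in_weak_star_closure_ofD:
  assumes "S \<subseteq> dual_space" "y \<in> weak_star closure_of S"
  shows "y \<in> dual_space"
    and "finite J \<Longrightarrow> \<epsilon> > 0 \<Longrightarrow> \<exists>s\<in>S. \<forall>x\<in>J. \<bar>s x - y x\<bar> < \<epsilon>"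
  using assms in_weak_star_closure_of_iff[OF assms(1)] by blast+

lemma weak_star_closure_of_add:
  assumes S: "S \<subseteq> dual_space" and add: "\<And>s s'. s \<in> S \<Longrightarrow> s' \<in> S \<Longrightarrow> (\<lambda>x. s x + s' x) \<in> S"
    and y: "y \<in> weak_star closure_of S" "y' \<in> weak_star closure_of S"
  shows "(\<lambda>x. y x + y' x) \<in> weak_star closure_of S"
proof (rule in_weak_star_closure_ofI[OF S])
  show "(\<lambda>x. y x + y' x) \<in> dual_space"
    using in_weak_star_closure_ofD(1)[OF S] y by (auto simp: dual_space_def intro: bounded_linear_add)
  fix J :: "'a set" and \<epsilon> :: real assume "finite J" "\<epsilon> > 0"
  then obtain s s' where s: "s \<in> S" "s' \<in> S" "\<forall>x\<in>J. \<bar>s x - y x\<bar> < \<epsilon> / 2"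
    "\<forall>x\<in>J. \<bar>s' x - y' x\<bar> < \<epsilon> / 2"
    using in_weak_star_closure_ofD(2)[OF S, of _ J "\<epsilon> / 2"] y by (metis half_gt_zero)
  have "\<bar>(s x + s' x) - (y x + y' x)\<bar> < \<epsilon>" if "x \<in> J" for x
  proof -
    have "\<bar>s x - y x\<bar> < \<epsilon> / 2" "\<bar>s' x - y' x\<bar> < \<epsilon> / 2" using s(3,4) that by auto
    then show ?thesis by arith
  qed
  then show "\<exists>s\<in>S. \<forall>x\<in>J. \<bar>s x - (y x + y' x)\<bar> < \<epsilon>" by (intro bexI[OF _ add[OF s(1,2)]]) simp
qed

lemma weak_star_closure_of_scale:
  assumes S: "S \<subseteq> dual_space" and scale: "\<And>s t. s \<in> S \<Longrightarrow> t \<ge> 0 \<Longrightarrow> (\<lambda>x. t * s x) \<in> S"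
    and y: "y \<in> weak_star closure_of S" and t: "t \<ge> 0"
  shows "(\<lambda>x. t * y x) \<in> weak_star closure_of S"
proof (rule in_weak_star_closure_ofI[OF S])
  show "(\<lambda>x. t * y x) \<in> dual_space"
    using in_weak_star_closure_ofD(1)[OF S y]
    by (auto simp: dual_space_def intro: bounded_linear_const_mult)
  fix J :: "'a set" and \<epsilon> :: real assume "finite J" "\<epsilon> > 0"
  then obtain s where s: "s \<in> S" "\<forall>x\<in>J. \<bar>s x - y x\<bar> < \<epsilon> / (t + 1)"
    using in_weak_star_closure_ofD(2)[OF S y, of J "\<epsilon> / (t + 1)"] t by auto
  have "\<bar>t * s x - t * y x\<bar> < \<epsilon>" if "x \<in> J" for x
  proof -
    have "\<bar>t * s x - t * y x\<bar> = t * \<bar>s x - y x\<bar>" using t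
      by (simp add: abs_mult flip: right_diff_distrib)
    also have "\<dots> \<le> t * (\<epsilon> / (t + 1))" using s(2) that t by (intro mult_left_mono) auto
    also have "\<dots> < \<epsilon>" using t \<open>\<epsilon> > 0\<close> by (simp add: field_simps)
    finally show ?thesis .
  qed
  then show "\<exists>s\<in>S. \<forall>x\<in>J. \<bar>s x - t * y x\<bar> < \<epsilon>" by (intro bexI[OF _ scale[OF s(1) t]]) simp
qed

lemma weak_star_closure_of_minus:
  assumes S: "S \<subseteq> dual_space" and minus: "\<And>s. s \<in> S \<Longrightarrow> (\<lambda>x. - s x) \<in> weak_star closure_of S"
    and y: "y \<in> weak_star closure_of S"
  shows "(\<lambda>x. - y x) \<in> weak_star closure_of S"
proof (rule in_weak_star_closure_ofI[OF S])
  show "(\<lambda>x. - y x) \<in> dual_space"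
    using in_weak_star_closure_ofD(1)[OF S y] by (auto simp: dual_space_def intro: bounded_linear_minus)
  fix J :: "'a set" and \<epsilon> :: real assume J: "finite J" and "\<epsilon> > 0"
  then have \<epsilon>2: "\<epsilon> / 2 > 0" by simp
  obtain s where s: "s \<in> S" "\<forall>x\<in>J. \<bar>s x - y x\<bar> < \<epsilon> / 2"
    using in_weak_star_closure_ofD(2)[OF S y J \<epsilon>2] by blast
  obtain s' where s': "s' \<in> S" "\<forall>x\<in>J. \<bar>s' x - - s x\<bar> < \<epsilon> / 2"
    using in_weak_star_closure_ofD(2)[OF S minus[OF s(1)] J \<epsilon>2] by blast
  have "\<bar>s' x - - y x\<bar> < \<epsilon>" if "x \<in> J" for x
  proof -
    have "\<bar>s x - y x\<bar> < \<epsilon> / 2" "\<bar>s' x - - s x\<bar> < \<epsilon> / 2" using s(2) s'(2) that by auto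
    then show ?thesis by arith
  qed
  with s'(1) show "\<exists>s\<in>S. \<forall>x\<in>J. \<bar>s x - - y x\<bar> < \<epsilon>" by blast
qed

lemma fun_subspace_weak_star_closure_of_cone:
  assumes S: "S \<subseteq> dual_space" "(\<lambda>_. 0) \<in> S"
    and add: "\<And>s s'. s \<in> S \<Longrightarrow> s' \<in> S \<Longrightarrow> (\<lambda>x. s x + s' x) \<in> S"
    and scale: "\<And>s t. s \<in> S \<Longrightarrow> t \<ge> 0 \<Longrightarrow> (\<lambda>x. t * s x) \<in> S"
    and minus: "\<And>s. s \<in> S \<Longrightarrow> (\<lambda>x. - s x) \<in> weak_star closure_of S"
  shows "fun_subspace (weak_star closure_of S)"
proof -
  let ?C = "weak_star closure_of S"
  have "S \<subseteq> ?C" by (rule closure_of_subset) (use S in \<open>simp add: weak_star_def\<close>)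
  then have zero_C: "(\<lambda>_. 0) \<in> ?C" using S(2) by blast
  have scale_C: "(\<lambda>x. t * y x) \<in> ?C" if "y \<in> ?C" for y t
  proof (cases "t \<ge> 0")
    case False
    then show ?thesis
      using weak_star_closure_of_scale[OF S(1) scale
          weak_star_closure_of_minus[OF S(1) minus that], of "- t"]
      by simp
  qed (rule weak_star_closure_of_scale[OF S(1) scale that])
  show ?thesis unfolding fun_subspace_def
    by (intro conjI ballI allI zero_C scale_C weak_star_closure_of_add[OF S(1) add])
qed

lemma subdiff0_le: "c \<in> subdiff0 g \<Longrightarrow> ereal (c x) \<le> g x"
  by (simp add: subdiff0_def)

lemma subdiff0_bounded_linear: "c \<in> subdiff0 g \<Longrightarrow> bounded_linear c"
  by (simp add: subdiff0_def dual_space_def)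

lemma subdiff0_real_le: "c \<in> subdiff0 g \<Longrightarrow> g x = ereal v \<Longrightarrow> c x \<le> v"
  using subdiff0_le[of c g x] by simp

lemma subdiff0_if_real_le:
  assumes "bounded_linear c" "c0 \<in> subdiff0 g" "\<And>x v. g x = ereal v \<Longrightarrow> c x \<le> v"
  shows "c \<in> subdiff0 g"
proof -
  have "ereal (c x) \<le> g x" for x
    using assms(3)[of x] subdiff0_le[OF assms(2), of x] by (cases "g x") auto
  then show ?thesis using assms(1) by (simp add: subdiff0_def dual_space_def)
qed

lemma subdiff0_convex:
  assumes "c1 \<in> subdiff0 g" "c2 \<in> subdiff0 g" "0 \<le> a" "a \<le> 1"
  shows "(\<lambda>x. a * c1 x + (1 - a) * c2 x) \<in> subdiff0 g"
proof (rule subdiff0_if_real_le[OF _ assms(1)])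
  show "bounded_linear (\<lambda>x. a * c1 x + (1 - a) * c2 x)"
    using assms(1,2) by (intro bounded_linear_add bounded_linear_const_mult subdiff0_bounded_linear)
  fix x v assume v: "g x = ereal v"
  have "a * c1 x \<le> a * v" "(1 - a) * c2 x \<le> (1 - a) * v"
    using assms(3,4) subdiff0_real_le[OF assms(1) v] subdiff0_real_le[OF assms(2) v]
    by (simp_all add: mult_left_mono)
  then show "a * c1 x + (1 - a) * c2 x \<le> v" by (simp add: algebra_simps)
qed

definition exact_set :: "('a::real_normed_vector \<Rightarrow> ereal) \<Rightarrow> 'a set" where
  "exact_set g = {x. \<forall>c\<in>subdiff0 g. ereal (c x) = g x}"

section \<open>Closed sublinear functions\<close>

lemma lsc_fun_le_tendsto:
  assumes "lsc_fun g" "(f \<longlongrightarrow> l) F" "F \<noteq> bot" "eventually (\<lambda>x. g (f x) \<le> c) F"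
  shows "g l \<le> c"
  using Lim_in_closed_set[of "{x. g x \<le> c}" f F l] assms by (simp add: lsc_fun_def)

locale closed_sublinear =
  fixes g :: "'a::real_normed_vector \<Rightarrow> ereal"
  assumes proper: "proper_fun g" and lsc: "lsc_fun g" and sublinear: "sublinear_efun g"
begin

lemma add_le: "g (x + y) \<le> g x + g y"
  using sublinear by (simp add: sublinear_efun_def)

lemma scaleR_eq: "t > 0 \<Longrightarrow> g (t *\<^sub>R x) = ereal t * g x"
  using sublinear by (simp add: sublinear_efun_def)

lemma not_MInf: "g x \<noteq> -\<infinity>"
  using proper by (simp add: proper_fun_def)

lemma zero: "g 0 = 0"
proof -
  obtain x a where a: "g x = ereal a"
    using proper not_MInf unfolding proper_fun_def by (metis ereal_cases)
  have eps: "g 0 \<le> ereal \<epsilon>" if "\<epsilon> > 0" for \<epsilon>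
  proof (rule lsc_fun_le_tendsto[OF lsc])
    have "((\<lambda>t. t *\<^sub>R x) \<longlongrightarrow> 0 *\<^sub>R x) (at_right 0)" by (intro tendsto_intros)
    then show "((\<lambda>t. t *\<^sub>R x) \<longlongrightarrow> 0) (at_right 0)" by simp
    have "((\<lambda>t. t * a) \<longlongrightarrow> 0 * a) (at_right 0)" by (intro tendsto_intros)
    then have "((\<lambda>t. t * a) \<longlongrightarrow> 0) (at_right 0)" by simp
    then have "eventually (\<lambda>t. t * a < \<epsilon>) (at_right 0)" using that by (rule order_tendstoD)
    moreover have "eventually (\<lambda>t::real. t > 0) (at_right 0)" by (rule eventually_at_right_less)
    ultimately show "eventually (\<lambda>t. g (t *\<^sub>R x) \<le> ereal \<epsilon>) (at_right 0)"
      by eventually_elim (simp add: scaleR_eq a)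
  qed (rule trivial_limit_at_right_real)
  have "g 0 \<le> 0" by (rule ereal_le_epsilon2) (simp add: eps)
  then obtain b where b: "g 0 = ereal b" using not_MInf[of 0] by (cases "g 0") auto
  have "g 0 = ereal 2 * g 0" by (metis scaleR_eq scale_zero_right zero_less_numeral)
  then have "b = 2 * b" unfolding b by simp
  then show ?thesis using b by simp
qed

lemma norm_lower_bound:
  obtains k0 :: real where "k0 > 0" "\<And>y. ereal (- k0 * norm y) \<le> g y"
proof -
  have "closed {y. g y \<le> ereal (-1)}" using lsc by (simp add: lsc_fun_def)
  moreover have "0 \<notin> {y. g y \<le> ereal (-1)}" using zero by simp
  ultimately have "\<not> (\<forall>e>0. \<exists>y\<in>{y. g y \<le> ereal (-1)}. dist y 0 < e)"
    using closed_approachable by blast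
  then obtain \<delta> where \<delta>: "\<delta> > 0" "\<And>y. dist y 0 < \<delta> \<Longrightarrow> ereal (-1) < g y"
    by (auto simp: not_le)
  have "ereal (- (2 / \<delta>) * norm y) \<le> g y" for y
  proof (cases "y = 0")
    case False
    define s where "s = \<delta> / (2 * norm y)"
    have s: "s > 0" "dist (s *\<^sub>R y) 0 < \<delta>" using False \<delta> by (auto simp: s_def)
    have "ereal (-1) < ereal s * g y" using \<delta>(2)[OF s(2)] scaleR_eq[OF s(1)] by simp
    moreover have "- 1 / s = - (2 / \<delta>) * norm y" using False \<delta> by (simp add: s_def field_simps)
    ultimately show ?thesis using s(1) not_MInf[of y] by (cases "g y") (auto simp: field_simps)
  qed (simp add: zero)
  then show ?thesis using that[of "2 / \<delta>"] \<delta> by simp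
qed

text \<open>The Pasch-Hausdorff envelope of g: the inf-convolution of g with k times the norm.\<close>
definition envelope :: "real \<Rightarrow> 'a \<Rightarrow> real" where
  "envelope k x = Inf {v + k * norm (x - y) | y v. g y = ereal v}"

context
  fixes k0 :: real
  assumes k0: "k0 > 0" "\<And>y. ereal (- k0 * norm y) \<le> g y"
begin

lemma lower_bound_at_distance: "g y = ereal v \<Longrightarrow> - k0 * norm x - k0 * norm (x - y) \<le> v"
proof -
  assume v: "g y = ereal v"
  have "norm y \<le> norm x + norm (x - y)"
    using norm_triangle_sub[of y x] by (simp add: norm_minus_commute)
  then have "k0 * norm y \<le> k0 * norm x + k0 * norm (x - y)"
    using k0(1) by (simp add: mult_left_mono flip: distrib_left)
  then show ?thesis using k0(2)[of y] v by simp
qed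

context
  fixes k :: real
  assumes k: "k0 \<le> k"
begin

lemma envelope_set_ne: "{v + k * norm (x - y) | y v. g y = ereal v} \<noteq> {}"
proof -
  have "g 0 = ereal 0" using zero by (simp add: zero_ereal_def)
  then show ?thesis by blast
qed

lemma envelope_set_bdd: "bdd_below {v + k * norm (x - y) | y v. g y = ereal v}"
proof (rule bdd_belowI)
  fix a assume "a \<in> {v + k * norm (x - y) | y v. g y = ereal v}"
  then obtain y v where a: "a = v + k * norm (x - y)" and v: "g y = ereal v" by blast
  have "k0 * norm (x - y) \<le> k * norm (x - y)" using k by (simp add: mult_right_mono)
  then show "- k0 * norm x \<le> a" unfolding a using lower_bound_at_distance[OF v, of x] by linarith
qed

lemma envelope_le: "g y = ereal v \<Longrightarrow> envelope k x \<le> v + k * norm (x - y)"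
  unfolding envelope_def by (rule cInf_lower[OF _ envelope_set_bdd]) blast

lemma envelope_le_norm: "envelope k x \<le> k * norm x"
  using envelope_le[of 0 0 x] zero by (simp add: zero_ereal_def)

lemma envelope_le_fun: "ereal (envelope k x) \<le> g x"
  using envelope_le[of x _ x] not_MInf[of x] by (cases "g x") auto

lemma envelope_lessE:
  assumes "envelope k x < r"
  obtains y where "g y \<le> ereal r" "(k - k0) * norm (x - y) < r + k0 * norm x"
proof -
  obtain a where "a \<in> {v + k * norm (x - y) | y v. g y = ereal v}" "a < r"
    using assms unfolding envelope_def cInf_less_iff[OF envelope_set_ne envelope_set_bdd] ..
  then obtain y v where v: "g y = ereal v" and lt: "v + k * norm (x - y) < r" by blast
  have "0 \<le> k * norm (x - y)" using k k0(1) by simp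
  then have "g y \<le> ereal r" using lt v by simp
  moreover have "(k - k0) * norm (x - y) < r + k0 * norm x"
    using lt lower_bound_at_distance[OF v, of x] by (simp add: algebra_simps)
  ultimately show ?thesis using that by blast
qed

lemma sublinear_envelope: "sublinear (envelope k)"
proof (rule sublinearI)
  fix x1 x2
  show "envelope k (x1 + x2) \<le> envelope k x1 + envelope k x2"
    unfolding envelope_def[of k x1] envelope_def[of k x2]
  proof (rule le_cInf_add[OF envelope_set_ne envelope_set_ne])
    fix a b
    assume "a \<in> {v + k * norm (x1 - y) | y v. g y = ereal v}"
      and "b \<in> {v + k * norm (x2 - y) | y v. g y = ereal v}"
    then obtain y1 v1 y2 v2 where v: "g y1 = ereal v1" "g y2 = ereal v2"
      and ab: "a = v1 + k * norm (x1 - y1)" "b = v2 + k * norm (x2 - y2)" by blast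
    have "g (y1 + y2) \<le> ereal (v1 + v2)" using add_le[of y1 y2] v by simp
    then obtain v where v12: "g (y1 + y2) = ereal v" "v \<le> v1 + v2"
      using not_MInf[of "y1 + y2"] by (cases "g (y1 + y2)") auto
    have "norm (x1 + x2 - (y1 + y2)) \<le> norm (x1 - y1) + norm (x2 - y2)"
      by (metis add_diff_add norm_triangle_ineq)
    then have "k * norm (x1 + x2 - (y1 + y2)) \<le> k * norm (x1 - y1) + k * norm (x2 - y2)"
      using k k0(1) by (simp add: distrib_left[symmetric] mult_left_mono)
    then show "envelope k (x1 + x2) \<le> a + b"
      using envelope_le[OF v12(1), of "x1 + x2"] v12(2) ab by linarith
  qed
next
  fix s :: real and x assume s: "s > 0"
  have "envelope k (s *\<^sub>R x) / s \<le> envelope k x" unfolding envelope_def[of k x]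
  proof (rule cInf_greatest[OF envelope_set_ne])
    fix a assume "a \<in> {v + k * norm (x - y) | y v. g y = ereal v}"
    then obtain y v where v: "g y = ereal v" and a: "a = v + k * norm (x - y)" by blast
    have "g (s *\<^sub>R y) = ereal (s * v)" using scaleR_eq[OF s] v by simp
    from envelope_le[OF this, of "s *\<^sub>R x"]
    have "envelope k (s *\<^sub>R x) \<le> s * v + k * norm (s *\<^sub>R (x - y))"
      by (simp add: scaleR_diff_right)
    also have "\<dots> = s * a" using s unfolding a by (simp add: algebra_simps del: scaleR_diff_right)
    finally show "envelope k (s *\<^sub>R x) / s \<le> a" using s by (simp add: field_simps)
  qed
  then show "envelope k (s *\<^sub>R x) \<le> s * envelope k x" using s by (simp add: field_simps)
qed

end

lemma exists_envelope_gt: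
  assumes r: "ereal r < g x0"
  obtains k where "k0 \<le> k" "r < envelope k x0"
proof -
  have "\<exists>k\<ge>k0. r < envelope k x0"
  proof (rule ccontr)
    assume "\<not> (\<exists>k\<ge>k0. r < envelope k x0)"
    then have small: "envelope k x0 \<le> r" if "k0 \<le> k" for k using that by (auto simp: not_less)
    obtain r' where r': "r < r'" "ereal r' < g x0" using ereal_dense2[OF r] by auto
    define M where "M = r' + k0 * norm x0"
    have "\<exists>y\<in>{y. g y \<le> ereal r'}. dist y x0 < e" if e: "e > 0" for e
    proof -
      define k where "k = k0 + (\<bar>M\<bar> + 1) / e"
      have k: "k0 \<le> k" using e by (simp add: k_def)
      then have "envelope k x0 < r'" using small[OF k] r'(1) by simp
      then obtain y where y: "g y \<le> ereal r'" and "(k - k0) * norm (x0 - y) < M"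
        unfolding M_def by (rule envelope_lessE[OF k])
      then have "(\<bar>M\<bar> + 1) / e * norm (x0 - y) < \<bar>M\<bar> + 1" by (simp add: k_def)
      then have "norm (x0 - y) * (\<bar>M\<bar> + 1) < e * (\<bar>M\<bar> + 1)" using e by (simp add: field_simps)
      then have "dist y x0 < e"
        unfolding dist_norm norm_minus_commute[of y] by (rule mult_right_less_imp_less) simp
      with y show ?thesis by blast
    qed
    moreover have "closed {y. g y \<le> ereal r'}" using lsc by (simp add: lsc_fun_def)
    ultimately have "g x0 \<le> ereal r'" using closed_approachable by blast
    then show False using r'(2) by simp
  qed
  then show ?thesis using that by blast
qed

end

lemma exists_subgradient_gt:
  assumes r: "ereal r < g x0"
  obtains f where "f \<in> subdiff0 g" "r < f x0"
proof -
  obtain k0 where k0: "k0 > 0" "\<And>y. ereal (- k0 * norm y) \<le> g y" using norm_lower_bound by blast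
  obtain k where k: "k0 \<le> k" and rk: "r < envelope k x0" using exists_envelope_gt[OF k0 r] by blast
  obtain f where f: "linear f" "\<And>x. f x \<le> envelope k x" "f x0 = envelope k x0"
    using sublinear_Hahn_Banach[OF sublinear_envelope[OF k0 k]] by blast
  have "bounded_linear f"
  proof (rule bounded_linear_intro[where K = k])
    show "f (x + y) = f x + f y" "f (c *\<^sub>R x) = c *\<^sub>R f x" for x y c
      using f(1) by (simp_all add: linear_add linear_scale)
    show "norm (f x) \<le> norm x * k" for x
      using f(2)[of x] f(2)[of "- x"] envelope_le_norm[OF k0 k, of x]
        envelope_le_norm[OF k0 k, of "- x"] linear_neg[OF f(1), of x]
      by (simp add: abs_le_iff mult.commute)
  qed
  moreover have "ereal (f x) \<le> g x" for x
    using f(2)[of x] envelope_le_fun[OF k0 k, of x] by (meson ereal_less_eq(3) order_trans)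
  ultimately have "f \<in> subdiff0 g" by (simp add: subdiff0_def dual_space_def)
  with that show ?thesis using rk f(3) by simp
qed

lemma subdiff0_nonempty: "subdiff0 g \<noteq> {}"
proof -
  have "ereal (-1) < g 0" using zero by simp
  then obtain f where "f \<in> subdiff0 g" by (rule exists_subgradient_gt)
  then show ?thesis by blast
qed

lemma exact_set_add: "x \<in> exact_set g \<Longrightarrow> y \<in> exact_set g \<Longrightarrow> x + y \<in> exact_set g"
  unfolding exact_set_def
proof (intro CollectI ballI)
  fix c assume "x \<in> {x. \<forall>c\<in>subdiff0 g. ereal (c x) = g x}" "y \<in> {x. \<forall>c\<in>subdiff0 g. ereal (c x) = g x}"
    and c: "c \<in> subdiff0 g"
  then have "g (x + y) \<le> ereal (c x) + ereal (c y)" using add_le[of x y] by simp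
  then show "ereal (c (x + y)) = g (x + y)"
    using subdiff0_le[OF c, of "x + y"] linear_add[OF subdiff0_bounded_linear[OF c, THEN bounded_linear.linear]]
    by (simp add: order_antisym)
qed

lemma exact_set_scaleR_pos:
  assumes x: "x \<in> exact_set g" and t: "t > 0"
  shows "t *\<^sub>R x \<in> exact_set g"
  unfolding exact_set_def
proof (intro CollectI ballI)
  fix c assume c: "c \<in> subdiff0 g"
  have "ereal (c (t *\<^sub>R x)) = ereal t * ereal (c x)"
    using linear_scale[OF subdiff0_bounded_linear[OF c, THEN bounded_linear.linear]] by simp
  also have "\<dots> = g (t *\<^sub>R x)" using x c scaleR_eq[OF t] by (simp add: exact_set_def)
  finally show "ereal (c (t *\<^sub>R x)) = g (t *\<^sub>R x)" .
qed

lemma exact_set_uminus: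
  assumes x: "x \<in> exact_set g"
  shows "- x \<in> exact_set g"
proof -
  obtain c0 where c0: "c0 \<in> subdiff0 g" using subdiff0_nonempty by blast
  have c_neg: "c (- x) = - c0 x" if c: "c \<in> subdiff0 g" for c
  proof -
    have "ereal (c x) = ereal (c0 x)" using x c c0 by (simp add: exact_set_def)
    then show ?thesis using linear_neg[OF subdiff0_bounded_linear[OF c, THEN bounded_linear.linear]] by simp
  qed
  have "g (- x) \<le> ereal (- c0 x)"
  proof (rule ccontr)
    assume "\<not> g (- x) \<le> ereal (- c0 x)"
    then obtain c where "c \<in> subdiff0 g" "- c0 x < c (- x)"
      using exists_subgradient_gt[of "- c0 x" "- x"] by (auto simp: not_le)
    then show False using c_neg by force
  qed
  then have "g (- x) = ereal (- c0 x)" using subdiff0_le[OF c0, of "- x"] c_neg[OF c0] by simp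
  then show ?thesis using c_neg by (simp add: exact_set_def)
qed

lemma subspace_exact_set: "subspace (exact_set g)"
proof (rule subspaceI)
  show zero_in: "0 \<in> exact_set g"
    using zero by (simp add: exact_set_def linear_0 subdiff0_bounded_linear bounded_linear.linear)
  show "x + y \<in> exact_set g" if "x \<in> exact_set g" "y \<in> exact_set g" for x y
    using exact_set_add that .
  show "t *\<^sub>R x \<in> exact_set g" if "x \<in> exact_set g" for x t
  proof (cases t "0::real" rule: linorder_cases)
    case less
    then show ?thesis using exact_set_scaleR_pos[OF exact_set_uminus[OF that], of "- t"] by simp
  qed (use zero_in exact_set_scaleR_pos[OF that] in simp_all)
qed

end

section \<open>Convex series of subgradients\<close>

lemma bounded_linear_suminf:
  fixes f :: "nat \<Rightarrow> 'a::real_normed_vector \<Rightarrow> real"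
  assumes f: "\<And>n. bounded_linear (f n)" and w: "\<And>n. w n \<ge> 0"
    and summable: "summable (\<lambda>n. w n * onorm (f n))"
  shows "summable (\<lambda>n. w n * f n x)" and "bounded_linear (\<lambda>x. \<Sum>n. w n * f n x)"
proof -
  have bound: "norm (w n * f n x) \<le> w n * onorm (f n) * norm x" for n x
    using mult_left_mono[OF onorm[OF f] w] by (simp add: abs_mult abs_of_nonneg[OF w] mult.assoc)
  have sum_norm: "summable (\<lambda>n. norm (w n * f n x))" for x
    by (rule summable_comparison_test'[OF summable_mult2[OF summable, of "norm x"], where N = 0])
      (use bound in simp)
  then show terms: "summable (\<lambda>n. w n * f n x)" for x by (rule summable_norm_cancel)
  show "bounded_linear (\<lambda>x. \<Sum>n. w n * f n x)"
  proof (rule bounded_linear_intro[where K = "\<Sum>n. w n * onorm (f n)"])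
    fix x y
    show "(\<Sum>n. w n * f n (x + y)) = (\<Sum>n. w n * f n x) + (\<Sum>n. w n * f n y)"
      using suminf_add[OF terms terms] linear_add[OF bounded_linear.linear[OF f]]
      by (simp add: distrib_left)
  next
    fix r x
    show "(\<Sum>n. w n * f n (r *\<^sub>R x)) = r *\<^sub>R (\<Sum>n. w n * f n x)"
      using suminf_mult[OF terms, of r] linear_scale[OF bounded_linear.linear[OF f]]
      by (simp add: algebra_simps)
  next
    fix x
    have "norm (\<Sum>n. w n * f n x) \<le> (\<Sum>n. norm (w n * f n x))" by (rule summable_norm[OF sum_norm])
    also have "\<dots> \<le> (\<Sum>n. w n * onorm (f n) * norm x)"
      by (rule suminf_le[OF bound sum_norm summable_mult2[OF summable]])
    finally show "norm (\<Sum>n. w n * f n x) \<le> norm x * (\<Sum>n. w n * onorm (f n))"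
      using suminf_mult2[OF summable, of "norm x"] by (simp add: mult.commute)
  qed
qed

lemma exists_convex_weights:
  fixes f :: "nat \<Rightarrow> 'a::real_normed_vector \<Rightarrow> real"
  assumes f: "\<And>n. bounded_linear (f n)"
  obtains w where "\<And>n. w n > 0" "w sums 1" "summable (\<lambda>n. w n * onorm (f n))"
proof -
  define u where "u n = (1/2) ^ n / (1 + onorm (f n))" for n
  have onorm_nonneg: "0 \<le> onorm (f n)" for n using onorm_pos_le[OF f] .
  have u_pos: "u n > 0" for n unfolding u_def using onorm_nonneg[of n] by simp
  have geom: "summable (\<lambda>n. (1/2::real) ^ n)" by (rule summable_geometric) simp
  have "u n \<le> (1/2) ^ n" for n
    unfolding u_def using onorm_nonneg[of n] by (simp add: divide_le_eq)
  then have u: "summable u"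
    using u_pos by (intro summable_comparison_test'[OF geom, where N = 0]) (simp add: abs_of_pos)
  have "u n * onorm (f n) \<le> (1/2) ^ n" for n
    unfolding u_def using onorm_nonneg[of n] by (simp add: divide_le_eq)
  then have uf: "summable (\<lambda>n. u n * onorm (f n))"
    using u_pos onorm_nonneg
    by (intro summable_comparison_test'[OF geom, where N = 0]) (simp add: abs_mult abs_of_pos)
  have U: "suminf u > 0" by (rule suminf_pos[OF u u_pos])
  show ?thesis
  proof (rule that[of "\<lambda>n. u n / suminf u"])
    show "u n / suminf u > 0" for n using u_pos U by simp
    show "(\<lambda>n. u n / suminf u) sums 1" using sums_divide[OF summable_sums[OF u], of "suminf u"] U by simp
    show "summable (\<lambda>n. u n / suminf u * onorm (f n))"
      using summable_divide[OF uf, of "suminf u"] by (simp add: field_simps)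
  qed
qed

context
  fixes g :: "'a::real_normed_vector \<Rightarrow> ereal" and f :: "nat \<Rightarrow> 'a \<Rightarrow> real" and w :: "nat \<Rightarrow> real"
  assumes f: "\<And>n. f n \<in> subdiff0 g" and w: "\<And>n. w n > 0" "w sums 1"
    and summable: "summable (\<lambda>n. w n * onorm (f n))"
begin

lemma summable_series: "summable (\<lambda>n. w n * f n x)"
  using bounded_linear_suminf(1)[OF subdiff0_bounded_linear[OF f] less_imp_le[OF w(1)] summable] .

lemma bounded_linear_series: "bounded_linear (\<lambda>x. \<Sum>n. w n * f n x)"
  using bounded_linear_suminf(2)[OF subdiff0_bounded_linear[OF f] less_imp_le[OF w(1)] summable] .

text \<open>With b = \<Sum> w_m f_m, the gap g - b = \<Sum> w_m (g - f_m) is a series of nonnegative terms,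
  hence dominates each of them.\<close>
lemma series_gap_le:
  assumes v: "g x = ereal v"
  shows "w n * (v - f n x) \<le> v - (\<Sum>m. w m * f m x)"
proof -
  have gaps: "(\<lambda>m. w m * v - w m * f m x) sums (v - (\<Sum>m. w m * f m x))"
    using sums_diff[OF sums_mult2[OF w(2), of v] summable_sums[OF summable_series]] by simp
  have "0 \<le> w m * v - w m * f m x" for m
    using subdiff0_real_le[OF f v] less_imp_le[OF w(1)] by (simp flip: right_diff_distrib)
  then have "(\<Sum>m\<in>{n}. w m * v - w m * f m x) \<le> v - (\<Sum>m. w m * f m x)"
    using sums_unique[OF gaps] sum_le_suminf[OF sums_summable[OF gaps], of "{n}"] by simp
  then show ?thesis by (simp add: right_diff_distrib)
qed

lemma series_in_subdiff0: "(\<lambda>x. \<Sum>n. w n * f n x) \<in> subdiff0 g"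
proof (rule subdiff0_if_real_le[OF bounded_linear_series f])
  fix x v assume v: "g x = ereal v"
  have "0 \<le> w 0 * (v - f 0 x)" using subdiff0_real_le[OF f v, of 0] w(1)[of 0] by simp
  then show "(\<Sum>n. w n * f n x) \<le> v" using series_gap_le[OF v, of 0] by linarith
qed

lemma series_reflection_in_subdiff0:
  defines "b \<equiv> \<lambda>x. \<Sum>n. w n * f n x"
  shows "(\<lambda>x. b x + w n * (b x - f n x)) \<in> subdiff0 g"
proof (rule subdiff0_if_real_le[OF _ f])
  show "bounded_linear (\<lambda>x. b x + w n * (b x - f n x))" unfolding b_def
    by (intro bounded_linear_add bounded_linear_series bounded_linear_const_mult bounded_linear_sub
        subdiff0_bounded_linear[OF f])
  fix x v assume v: "g x = ereal v"
  have gap: "w n * (v - f n x) \<le> v - b x" unfolding b_def by (rule series_gap_le[OF v])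
  have "b x + w n * (b x - f n x) = b x + w n * (v - f n x) - w n * (v - b x)"
    by (simp add: algebra_simps)
  also have "\<dots> \<le> v - w n * (v - b x)" using gap by simp
  also have "\<dots> \<le> v"
  proof -
    have "0 \<le> w n * (v - f n x)" using subdiff0_real_le[OF f v, of n] w(1)[of n] by simp
    then show ?thesis using gap w(1)[of n] by simp
  qed
  finally show "b x + w n * (b x - f n x) \<le> v" .
qed

lemma series_touches:
  assumes "g x \<le> ereal (\<Sum>m. w m * f m x)"
  shows "ereal (f n x) = g x"
proof -
  obtain v where v: "g x = ereal v"
    using assms subdiff0_le[OF f, of 0 x] by (cases "g x") auto
  have "w n * (v - f n x) \<le> 0" using series_gap_le[OF v, of n] assms v by simp
  then have "v \<le> f n x" using w(1)[of n] by (simp add: mult_le_0_iff)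
  then show ?thesis using subdiff0_real_le[OF f v, of n] v by simp
qed

lemma below_set_series:
  assumes dense: "\<And>c x \<epsilon>. c \<in> subdiff0 g \<Longrightarrow> \<epsilon> > 0 \<Longrightarrow> \<exists>n. \<bar>f n x - c x\<bar> < \<epsilon>"
  shows "below_set g (\<lambda>x. \<Sum>n. w n * f n x) = exact_set g"
proof (intro equalityI subsetI)
  fix x assume "x \<in> exact_set g"
  then have "ereal (\<Sum>n. w n * f n x) = g x" using bspec[OF _ series_in_subdiff0]
    by (simp add: exact_set_def)
  then show "x \<in> below_set g (\<lambda>x. \<Sum>n. w n * f n x)" by (simp add: below_set_def)
next
  fix x assume "x \<in> below_set g (\<lambda>x. \<Sum>n. w n * f n x)"
  then have touch: "ereal (f n x) = g x" for n by (intro series_touches) (simp add: below_set_def)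
  define v where "v = f 0 x"
  have v: "g x = ereal v" using touch[of 0] by (simp add: v_def)
  have "c x = v" if c: "c \<in> subdiff0 g" for c
  proof (rule ccontr)
    assume "c x \<noteq> v"
    then have "v - c x > 0" using subdiff0_real_le[OF c v] by simp
    then obtain n where "\<bar>f n x - c x\<bar> < v - c x" using dense[OF c] by blast
    then show False using touch[of n] v by simp
  qed
  then show "x \<in> exact_set g" using v by (simp add: exact_set_def)
qed

end


section \<open>Weak-star separability of the subdifferential\<close>

lemma abs_diff_floor_divide_less:
  fixes a k :: real
  assumes "k > 0"
  shows "\<bar>a - \<lfloor>a * k\<rfloor> / k\<bar> < 1 / k"
proof -
  have "a - \<lfloor>a * k\<rfloor> / k = (a * k - \<lfloor>a * k\<rfloor>) / k" using assms by (simp add: field_simps)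
  moreover have "0 \<le> a * k - \<lfloor>a * k\<rfloor>" "a * k - \<lfloor>a * k\<rfloor> < 1" by linarith+
  ultimately show ?thesis using assms by (simp add: divide_strict_right_mono)
qed

lemma countable_pointwise_dense_subset:
  fixes B :: "('a::real_normed_vector \<Rightarrow> real) set" and D :: "'a set"
  assumes D: "countable D" "closure D = UNIV" and B: "B \<subseteq> dual_space"
  obtains F where "countable F" "F \<subseteq> B"
    "\<And>c J \<epsilon>. c \<in> B \<Longrightarrow> finite J \<Longrightarrow> \<epsilon> > 0 \<Longrightarrow> \<exists>h\<in>F. \<forall>x\<in>J. \<bar>h x - c x\<bar> < \<epsilon>"
proof
  define box where "box i = {c \<in> B. onorm c \<le> real (snd i) \<and>
      (\<forall>(d, q) \<in> set (fst i). \<bar>c d - q / (real (snd i) + 1)\<bar> < 1 / (real (snd i) + 1))}"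
    for i :: "('a \<times> int) list \<times> nat"
  define I where "I = {i \<in> lists (D \<times> UNIV) \<times> UNIV. box i \<noteq> {}}"
  define F where "F = (\<lambda>i. SOME c. c \<in> box i) ` I"
  have some_box: "(SOME c. c \<in> box i) \<in> box i" if "i \<in> I" for i
    using that unfolding I_def by (simp add: some_in_eq)
  have "countable (lists (D \<times> (UNIV :: int set)) \<times> (UNIV :: nat set))" using D(1) by simp
  then show "countable F" unfolding F_def I_def by (auto intro: countable_subset)
  show "F \<subseteq> B" unfolding F_def using some_box by (auto simp: box_def)
  fix c and J :: "'a set" and \<epsilon> :: real assume c: "c \<in> B" and J: "finite J" and \<epsilon>: "\<epsilon> > 0"
  define m where "m = max (nat \<lceil>onorm c\<rceil>) (nat \<lceil>4 / \<epsilon>\<rceil>)"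
  have "onorm c \<le> real m" "4 / \<epsilon> \<le> real m"
    unfolding m_def
    by (meson real_nat_ceiling_ge max.cobounded1 max.cobounded2 of_nat_le_iff order_trans)+
  then have m: "onorm c \<le> real m" "1 / (real m + 1) < \<epsilon> / 4" using \<epsilon> by (auto simp: field_simps)
  define \<delta> where "\<delta> = \<epsilon> / (4 * (real m + 1))"
  have \<delta>: "\<delta> > 0" "real m * \<delta> < \<epsilon> / 4" using \<epsilon> by (auto simp: \<delta>_def field_simps)
  have "\<forall>x\<in>J. \<exists>d\<in>D. dist d x < \<delta>" using D(2) \<delta>(1) closure_approachable by blast
  then obtain d where d: "\<And>x. x \<in> J \<Longrightarrow> d x \<in> D \<and> dist (d x) x < \<delta>" by metis
  define q where "q x = \<lfloor>c (d x) * (real m + 1)\<rfloor>" for x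
  have q: "\<bar>c (d x) - q x / (real m + 1)\<bar> < 1 / (real m + 1)" for x
    unfolding q_def by (rule abs_diff_floor_divide_less) simp
  obtain js where js: "set js = J" using finite_list[OF J] by blast
  define i where "i = (map (\<lambda>x. (d x, q x)) js, m)"
  have "c \<in> box i" using c m(1) q unfolding box_def i_def js[symmetric] by auto
  then have "i \<in> I" using d unfolding I_def i_def js[symmetric] by auto
  define h where "h = (SOME c. c \<in> box i)"
  have "h \<in> F" unfolding h_def F_def using \<open>i \<in> I\<close> by blast
  have near: "\<bar>k x - k (d x)\<bar> < \<epsilon> / 4" if "k \<in> box i" "x \<in> J" for k x
  proof -
    have k: "bounded_linear k" "onorm k \<le> real m" using that B
      by (auto simp: box_def i_def dual_space_def)
    have "\<bar>k x - k (d x)\<bar> = \<bar>k (x - d x)\<bar>" by (simp add: linear_diff[OF bounded_linear.linear[OF k(1)]])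
    also have "\<dots> \<le> onorm k * norm (x - d x)" using onorm[OF k(1)] by simp
    also have "\<dots> \<le> real m * \<delta>"
      using k d[OF that(2)] onorm_pos_le[OF k(1)]
      by (intro mult_mono) (auto simp: dist_norm norm_minus_commute less_imp_le)
    finally show ?thesis using \<delta>(2) by linarith
  qed
  have "\<bar>h x - c x\<bar> < \<epsilon>" if "x \<in> J" for x
  proof -
    have "h \<in> box i" unfolding h_def using some_box[OF \<open>i \<in> I\<close>] .
    then have "\<bar>h (d x) - q x / (real m + 1)\<bar> < 1 / (real m + 1)"
      using that unfolding box_def i_def js[symmetric] by auto
    then show ?thesis using near[OF \<open>h \<in> box i\<close> that] near[OF \<open>c \<in> box i\<close> that] q[of x] m(2) by linarith
  qed
  then show "\<exists>h\<in>F. \<forall>x\<in>J. \<bar>h x - c x\<bar> < \<epsilon>" using \<open>h \<in> F\<close> by blast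
qed


lemma exists_pointwise_dense_sequence:
  fixes B :: "('a::real_normed_vector \<Rightarrow> real) set"
  assumes "separable_normed TYPE('a)" "B \<subseteq> dual_space" "B \<noteq> {}"
  obtains f :: "nat \<Rightarrow> 'a \<Rightarrow> real" where "\<And>n. f n \<in> B"
    "\<And>c J \<epsilon>. c \<in> B \<Longrightarrow> finite J \<Longrightarrow> \<epsilon> > 0 \<Longrightarrow> \<exists>n. \<forall>x\<in>J. \<bar>f n x - c x\<bar> < \<epsilon>"
proof -
  obtain D :: "'a set" where "countable D" "closure D = UNIV"
    using assms(1) unfolding separable_normed_def by blast
  then obtain F where F: "countable F" "F \<subseteq> B"
    and dense: "\<And>c J \<epsilon>. c \<in> B \<Longrightarrow> finite J \<Longrightarrow> \<epsilon> > 0 \<Longrightarrow> \<exists>h\<in>F. \<forall>x\<in>J. \<bar>h x - c x\<bar> < \<epsilon>"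
    using countable_pointwise_dense_subset[OF _ _ assms(2)] by metis
  obtain c0 where "c0 \<in> B" using assms(3) by blast
  from dense[OF this, of "{}" 1] have "F \<noteq> {}" by auto
  show ?thesis
  proof (rule that[of "from_nat_into F"])
    show "from_nat_into F n \<in> B" for n using F(2) from_nat_into[OF \<open>F \<noteq> {}\<close>] by blast
    fix c and J :: "'a set" and \<epsilon> :: real assume "c \<in> B" "finite J" "\<epsilon> > 0"
    then obtain h where h: "h \<in> F" "\<forall>x\<in>J. \<bar>h x - c x\<bar> < \<epsilon>" using dense by blast
    then have "h \<in> range (from_nat_into F)" using range_from_nat_into[OF \<open>F \<noteq> {}\<close> F(1)] by simp
    with h(2) show "\<exists>n. \<forall>x\<in>J. \<bar>from_nat_into F n x - c x\<bar> < \<epsilon>" by blast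
  qed
qed

section \<open>Points of the weak-star quasi-relative interior\<close>

context
  fixes B :: "('a::real_normed_vector \<Rightarrow> real) set" and b :: "'a \<Rightarrow> real"
  assumes B: "B \<subseteq> dual_space"
    and convex: "\<And>c1 c2 a. c1 \<in> B \<Longrightarrow> c2 \<in> B \<Longrightarrow> 0 \<le> a \<Longrightarrow> a \<le> 1 \<Longrightarrow>
      (\<lambda>x. a * c1 x + (1 - a) * c2 x) \<in> B"
    and b: "b \<in> B"
begin

lemma cone_diff_scale:
  assumes "s \<in> {(\<lambda>x. t * (c x - b x)) | t c. t \<ge> 0 \<and> c \<in> B}" and "a \<ge> 0"
  shows "(\<lambda>x. a * s x) \<in> {(\<lambda>x. t * (c x - b x)) | t c. t \<ge> 0 \<and> c \<in> B}"
proof -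
  obtain t c where "t \<ge> 0" "c \<in> B" "s = (\<lambda>x. t * (c x - b x))" using assms(1) by blast
  then have "(\<lambda>x. a * s x) = (\<lambda>x. (a * t) * (c x - b x)) \<and> a * t \<ge> 0 \<and> c \<in> B"
    using assms(2) by (simp add: mult.assoc)
  then show ?thesis by blast
qed

lemma cone_diff_add:
  assumes "s1 \<in> {(\<lambda>x. t * (c x - b x)) | t c. t \<ge> 0 \<and> c \<in> B}"
    and "s2 \<in> {(\<lambda>x. t * (c x - b x)) | t c. t \<ge> 0 \<and> c \<in> B}"
  shows "(\<lambda>x. s1 x + s2 x) \<in> {(\<lambda>x. t * (c x - b x)) | t c. t \<ge> 0 \<and> c \<in> B}"
proof -
  obtain t1 c1 t2 c2 where t: "t1 \<ge> 0" "t2 \<ge> 0" and c: "c1 \<in> B" "c2 \<in> B"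
    and s: "s1 = (\<lambda>x. t1 * (c1 x - b x))" "s2 = (\<lambda>x. t2 * (c2 x - b x))" using assms by blast
  show ?thesis
  proof (cases "t1 + t2 = 0")
    case True
    then have "t1 = 0" "t2 = 0" using t by auto
    then have "(\<lambda>x. s1 x + s2 x) = (\<lambda>x. 0 * (b x - b x))" using s by simp
    then show ?thesis using b by blast
  next
    case False
    then have pos: "t1 + t2 > 0" using t by simp
    define a where "a = t1 / (t1 + t2)"
    have a: "0 \<le> a" "a \<le> 1" "1 - a = t2 / (t1 + t2)" using t pos by (auto simp: a_def field_simps)
    have ta: "(t1 + t2) * a = t1" "(t1 + t2) * (1 - a) = t2" using pos
      by (simp_all add: a_def field_simps)
    have "s1 x + s2 x = (t1 + t2) * ((a * c1 x + (1 - a) * c2 x) - b x)" for x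
    proof -
      have "(t1 + t2) * ((a * c1 x + (1 - a) * c2 x) - b x)
          = ((t1 + t2) * a) * c1 x + ((t1 + t2) * (1 - a)) * c2 x - (t1 + t2) * b x"
        by (simp add: algebra_simps)
      also have "\<dots> = s1 x + s2 x" unfolding ta s by (simp add: algebra_simps)
      finally show ?thesis by simp
    qed
    then have "(\<lambda>x. s1 x + s2 x) = (\<lambda>x. (t1 + t2) * ((a * c1 x + (1 - a) * c2 x) - b x))" by simp
    then show ?thesis using convex[OF c a(1,2)] pos by fastforce
  qed
qed

text \<open>Each b - c is a weak-star limit of the cone generated by B - b, since
  t (b - f_n) = (t / w_n) (b + w_n (b - f_n) - b) lies in it.\<close>
lemma uminus_cone_diff_in_weak_star_closure:
  assumes w: "\<And>n. w n > 0" and reflect: "\<And>n. (\<lambda>x. b x + w n * (b x - f n x)) \<in> B"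
    and dense: "\<And>c J \<epsilon>. c \<in> B \<Longrightarrow> finite J \<Longrightarrow> \<epsilon> > 0 \<Longrightarrow> \<exists>n. \<forall>x\<in>J. \<bar>f n x - c x\<bar> < \<epsilon>"
    and t: "t \<ge> 0" and c: "c \<in> B"
  shows "(\<lambda>x. - (t * (c x - b x))) \<in> weak_star closure_of {(\<lambda>x. t * (c x - b x)) | t c. t \<ge> 0 \<and> c \<in> B}"
    (is "?s \<in> weak_star closure_of ?S")
proof (rule in_weak_star_closure_ofI)
  show S: "?S \<subseteq> dual_space" using B b
    by (auto simp: dual_space_def intro!: bounded_linear_const_mult bounded_linear_sub)
  show "?s \<in> dual_space" using B b c
    by (auto simp: dual_space_def intro!: bounded_linear_minus bounded_linear_const_mult bounded_linear_sub)
  fix J :: "'a set" and \<epsilon> :: real assume "finite J" "\<epsilon> > 0"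
  then obtain n where n: "\<forall>x\<in>J. \<bar>f n x - c x\<bar> < \<epsilon> / (t + 1)"
    using dense[OF c] t by (metis add_nonneg_pos divide_pos_pos zero_less_one)
  define r where "r = (\<lambda>x. b x + w n * (b x - f n x))"
  define s' where "s' x = t / w n * (r x - b x)" for x
  have "t / w n \<ge> 0" "r \<in> B" using t w[of n] reflect[of n] by (simp_all add: r_def)
  then have s'S: "s' \<in> ?S" unfolding s'_def by blast
  have "\<forall>x\<in>J. \<bar>s' x - ?s x\<bar> < \<epsilon>"
  proof
    fix x assume "x \<in> J"
    have "s' x - ?s x = t * (c x - f n x)" using w[of n] by (simp add: s'_def r_def field_simps)
    then have "\<bar>s' x - ?s x\<bar> = t * \<bar>f n x - c x\<bar>" using t by (simp add: abs_mult abs_minus_commute)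
    also have "\<dots> \<le> t * (\<epsilon> / (t + 1))" using n \<open>x \<in> J\<close> t by (intro mult_left_mono) auto
    also have "\<dots> < \<epsilon>" using t \<open>\<epsilon> > 0\<close> by (simp add: field_simps)
    finally show "\<bar>s' x - ?s x\<bar> < \<epsilon>" .
  qed
  then show "\<exists>s'\<in>?S. \<forall>x\<in>J. \<bar>s' x - ?s x\<bar> < \<epsilon>" using s'S by (rule bexI[where x = s'])
qed

lemma in_wstar_qri_if_reflections:
  assumes w: "\<And>n. w n > 0" and reflect: "\<And>n. (\<lambda>x. b x + w n * (b x - f n x)) \<in> B"
    and dense: "\<And>c J \<epsilon>. c \<in> B \<Longrightarrow> finite J \<Longrightarrow> \<epsilon> > 0 \<Longrightarrow> \<exists>n. \<forall>x\<in>J. \<bar>f n x - c x\<bar> < \<epsilon>"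
  shows "b \<in> wstar_qri B"
proof -
  let ?S = "{(\<lambda>x. t * (c x - b x)) | t c. t \<ge> 0 \<and> c \<in> B}"
  have S: "?S \<subseteq> dual_space" using B b
    by (auto simp: dual_space_def intro!: bounded_linear_const_mult bounded_linear_sub)
  have "(\<lambda>_. 0) \<in> ?S" using b by force
  moreover have "(\<lambda>x. - s x) \<in> weak_star closure_of ?S" if "s \<in> ?S" for s
  proof -
    obtain t c where "t \<ge> 0" "c \<in> B" "s = (\<lambda>x. t * (c x - b x))" using \<open>s \<in> ?S\<close> by blast
    then show ?thesis using uminus_cone_diff_in_weak_star_closure[OF w reflect dense] by simp
  qed
  ultimately have "fun_subspace (weak_star closure_of ?S)"
    by (intro fun_subspace_weak_star_closure_of_cone[OF S] cone_diff_add cone_diff_scale)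
  then show ?thesis using b by (simp add: wstar_qri_def)
qed

end

theorem proposition7:
  fixes g :: "'a::real_normed_vector \<Rightarrow> ereal"
  assumes "separable_normed TYPE('a)"
    and "proper_fun g" and "lsc_fun g" and "convex_efun g"
    and "sublinear_efun g"
  shows "wstar_qri (subdiff0 g) \<noteq> {}
    \<and> (\<exists>xs \<in> dual_space. subspace (below_set g xs))"
proof -
  \<comment> \<open>Convexity of g (assms(4)) is implied by sublinearity and not needed.\<close>
  interpret closed_sublinear g using assms(2,3,5) by unfold_locales
  have B: "subdiff0 g \<subseteq> dual_space" by (auto simp: subdiff0_def)
  obtain f :: "nat \<Rightarrow> 'a \<Rightarrow> real" where f: "\<And>n. f n \<in> subdiff0 g"
    and dense: "\<And>c J \<epsilon>. c \<in> subdiff0 g \<Longrightarrow> finite J \<Longrightarrow> \<epsilon> > 0 \<Longrightarrow>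
      \<exists>n. \<forall>x\<in>J. \<bar>f n x - c x\<bar> < \<epsilon>"
    using exists_pointwise_dense_sequence[OF assms(1) B subdiff0_nonempty] by blast
  obtain w where w: "\<And>n. w n > 0" "w sums 1" "summable (\<lambda>n. w n * onorm (f n))"
    using exists_convex_weights[of f] subdiff0_bounded_linear[OF f] by blast
  note series = series_in_subdiff0[where f = f and w = w, OF f w]
    series_reflection_in_subdiff0[where f = f and w = w, OF f w]
    below_set_series[where f = f and w = w, OF f w]
  define xs where "xs = (\<lambda>x. \<Sum>n. w n * f n x)"
  have "xs \<in> wstar_qri (subdiff0 g)" unfolding xs_def
    by (rule in_wstar_qri_if_reflections[OF B subdiff0_convex series(1) w(1) series(2) dense])
  moreover have "subspace (below_set g xs)"
    using series(3) dense[of _ "{_}"] subspace_exact_set unfolding xs_def by simp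
  moreover have "xs \<in> dual_space" using series(1) B unfolding xs_def by blast
  ultimately show ?thesis by blast
qed

end
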